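(* Let $m$ be a positive integer and let $a,d_1,d_2\in\mathbb{Z}/m\mathbb{Z}$ with $\gcd(d_1,m)=\gcd(d_2,m)$, and let $n$ be a positive integer with $n\equiv 0$ or $n\equiv -1\pmod{m/\gcd(d_1,m)}$. Then the arithmetic triangle $\nabla=\mathrm{AT}(a,d_1,d_2,n)$ satisfies $\mathfrak{m}_\nabla(x+\gcd(d_2-d_1,m))=\mathfrak{m}_\nabla(x)$ for all $x\in\mathbb{Z}/m\mathbb{Z}$.
   Context: For $d\in\mathbb{Z}/m\mathbb{Z}$, $\gcd(d,m)$ is the gcd of $m$ with any integer representative of $d$. The arithmetic triangle $\mathrm{AT}(a,d_1,d_2,n)$ is the family $(a+id_2+jd_1)_{(i,j)\in\mathbb{N}^2,\,i+j<n}$ of elements of $\mathbb{Z}/m\mathbb{Z}$, regarded as a multiset; $\mathfrak{m}_\nabla(x)$ is the number of $(i,j)$ with $i+j<n$ and $a+id_2+jd_1=x$. *)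

theory Defs
  imports "HOL-Number_Theory.Cong"
begin

text \<open>Elements of Z/mZ are represented by integer representatives; equality in Z/mZ
  is congruence modulo m.\<close>

definition at_mult :: "int \<Rightarrow> int \<Rightarrow> int \<Rightarrow> int \<Rightarrow> nat \<Rightarrow> int \<Rightarrow> nat" where
  "at_mult m a d1 d2 n x =
     card {(i, j). i + j < n \<and>
              [a + int i * d2 + int j * d1 = x] (mod m)} "

end

theory Submission
  imports Defs
begin

text \<open>Write \<open>\<mu>\<^sub>n\<close> for the multiplicity in \<open>AT(a,d\<^sub>1,d\<^sub>2,n)\<close>. Peeling off the column
  \<open>i = 0\<close> of the triangle of size \<open>n + 1\<close>, or symmetrically its row \<open>j = 0\<close>, gives
  \<open>\<mu>\<^sub>n(x - d\<^sub>2) + #{k \<le> n. a + k d\<^sub>1 = x} = \<mu>\<^sub>n(x - d\<^sub>1) + #{k \<le> n. a + k d\<^sub>2 = x}\<close>.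
  A progression \<open>a + k d\<close> with \<open>gcd(d,m) = g\<close> hits every element of the coset \<open>a + g\<int>/m\<int>\<close>
  exactly once in each block of \<open>m/g\<close> consecutive steps; so when \<open>n + 1 \<equiv> 0\<close> or \<open>1\<close>
  modulo \<open>m/g\<close>, the two boundary counts agree. Thus \<open>\<mu>\<^sub>n\<close> is invariant under translation by
  \<open>d\<^sub>2 - d\<^sub>1\<close> and by \<open>m\<close>, hence by their gcd.\<close>

lemma periodic_int_multiple:
  fixes f :: "int \<Rightarrow> 'a"
  assumes periodic: "\<And>y. f (y + p) = f y"
  shows "f (y + s * p) = f y"
proof (induction s rule: int_induct[where k = 0])
  case base
  then show ?case by simp
next
  case (step1 i)
  have "f (y + (i + 1) * p) = f ((y + i * p) + p)" by (simp add: algebra_simps)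
  then show ?case using periodic step1.IH by simp
next
  case (step2 i)
  have "f (y + (i - 1) * p) = f ((y + (i - 1) * p) + p)" by (rule periodic[symmetric])
  also have "\<dots> = f (y + i * p)" by (simp add: algebra_simps)
  finally show ?case using step2.IH by simp
qed

lemma periodic_int_gcd:
  fixes f :: "int \<Rightarrow> 'a"
  assumes "\<And>y. f (y + p) = f y" and "\<And>y. f (y + q) = f y"
  shows "f (y + gcd p q) = f y"
proof -
  obtain u v where "u * p + v * q = gcd p q" using bezout_int by blast
  then have "f (y + gcd p q) = f ((y + u * p) + v * q)" by (simp add: algebra_simps)
  also have "\<dots> = f y" using periodic_int_multiple assms by metis
  finally show ?thesis .
qed

lemma card_cong_solutions_below_modulus:
  fixes u c :: int and M :: nat
  assumes "M > 0" and "coprime u (int M)"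
  shows "card {k. k < M \<and> [int k * u = c] (mod int M)} = 1"
proof -
  obtain s where s: "[u * s = c] (mod int M)"
    using cong_solve_dvd_int[of u "int M" c] assms(2) by auto
  define k0 where "k0 = nat (s mod int M)"
  have k0: "int k0 = s mod int M" using assms(1) by (simp add: k0_def)
  have k0_solution: "[int k0 * u = c] (mod int M)"
  proof -
    have "[int k0 = s] (mod int M)" using k0 by (simp add: cong_def)
    then have "[int k0 * u = s * u] (mod int M)" by (rule cong_mult) simp
    then show ?thesis using s by (metis cong_trans mult.commute)
  qed
  have "{k. k < M \<and> [int k * u = c] (mod int M)} = {k0}"
  proof safe
    show "k0 < M" using k0 assms(1) by (metis of_nat_less_iff pos_mod_bound of_nat_0_less_iff)
    show "[int k0 * u = c] (mod int M)" by (rule k0_solution)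
  next
    fix k assume k: "k < M" "[int k * u = c] (mod int M)"
    have "[int k * u = int k0 * u] (mod int M)"
      using k(2) k0_solution by (metis cong_sym cong_trans)
    then have "[int k = int k0] (mod int M)" using cong_mult_rcancel assms(2) by blast
    then show "k = k0"
      using cong_less_imp_eq_int[of "int k" "int M" "int k0"] k(1) k0 assms(1) by simp
  qed
  then show ?thesis by simp
qed

definition ap_mult :: "int \<Rightarrow> int \<Rightarrow> int \<Rightarrow> nat \<Rightarrow> int \<Rightarrow> nat" where
  "ap_mult m a d L x = card {k. k < L \<and> [a + int k * d = x] (mod m)}"

lemma ap_mult_cong_start:
  assumes "[a = a'] (mod m)"
  shows "ap_mult m a d L x = ap_mult m a' d L x"
proof -
  have "[a + int k * d = x] (mod m) \<longleftrightarrow> [a' + int k * d = x] (mod m)" for k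
    using assms cong_add_rcancel by (metis cong_sym cong_trans)
  then show ?thesis unfolding ap_mult_def by simp
qed

lemma ap_mult_one: "ap_mult m a d 1 x = (if [a = x] (mod m) then 1 else 0)"
proof -
  have "{k. k < 1 \<and> [a + int k * d = x] (mod m)} = (if [a = x] (mod m) then {0} else {})"
    by auto
  then show ?thesis unfolding ap_mult_def by simp
qed

lemma ap_mult_add:
  "ap_mult m a d (L + L') x = ap_mult m a d L x + ap_mult m (a + int L * d) d L' x"
proof -
  let ?hits = "\<lambda>a L. {k. k < L \<and> [a + int k * d = x] (mod m)}"
  have "?hits a (L + L') = ?hits a L \<union> (\<lambda>k. L + k) ` ?hits (a + int L * d) L'"
  proof (rule set_eqI)
    fix k
    show "k \<in> ?hits a (L + L') \<longleftrightarrow> k \<in> ?hits a L \<union> (\<lambda>k. L + k) ` ?hits (a + int L * d) L'"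
    proof (cases "k < L")
      case False
      then obtain k' where "k = L + k'" using le_Suc_ex not_less by blast
      then show ?thesis by (auto simp: algebra_simps)
    qed auto
  qed
  moreover have "?hits a L \<inter> (\<lambda>k. L + k) ` ?hits (a + int L * d) L' = {}"
    by auto
  ultimately show ?thesis
    unfolding ap_mult_def by (simp add: card_Un_disjoint card_image)
qed

lemma ap_mult_Suc:
  "ap_mult m a d (Suc L) x = ap_mult m a d L x + (if [a + int L * d = x] (mod m) then 1 else 0)"
  using ap_mult_add[of m a d L 1 x] ap_mult_one[of m "a + int L * d" d x] by simp

lemma ap_mult_multiple_period:
  assumes "[int M * d = 0] (mod m)"
  shows "ap_mult m a d (q * M) x = q * ap_mult m a d M x"
proof (induction q)
  case (Suc q)
  have "[a + int M * d = a] (mod m)" using assms cong_add_lcancel_0 by blast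
  then have "ap_mult m a d (M + q * M) x = ap_mult m a d M x + ap_mult m a d (q * M) x"
    using ap_mult_add ap_mult_cong_start by metis
  then show ?case using Suc.IH by simp
qed (simp add: ap_mult_def)

lemma div_gcd_mult_cong_0:
  fixes m d :: int
  assumes "m > 0"
  shows "[int (nat (m div gcd d m)) * d = 0] (mod m)"
proof -
  have "m div gcd d m \<ge> 0" using assms by (simp add: pos_imp_zdiv_nonneg_iff)
  then have "int (nat (m div gcd d m)) * d = m div gcd d m * d" by simp
  also have "\<dots> = m * (d div gcd d m)"
    by (metis div_mult_swap dvd_div_mult gcd_dvd1 gcd_dvd2 mult.commute)
  finally have "int (nat (m div gcd d m)) * d = m * (d div gcd d m)" .
  then show ?thesis by (simp add: cong_0_iff)
qed

lemma ap_mult_period: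
  fixes m a d x :: int
  assumes "m > 0"
  shows "ap_mult m a d (nat (m div gcd d m)) x = (if gcd d m dvd x - a then 1 else 0)"
proof -
  define g where "g = gcd d m"
  define M where "M = nat (m div g)"
  have g_pos: "g > 0" using assms by (simp add: g_def)
  have M_int: "int M = m div g"
    using assms by (simp add: M_def g_def pos_imp_zdiv_nonneg_iff)
  then have m_eq: "m = g * int M" by (simp add: g_def)
  have M_pos: "M > 0" using m_eq assms g_pos by (simp add: zero_less_mult_iff)
  have coprime: "coprime (d div g) (int M)"
    using div_gcd_coprime[of d m] assms M_int by (simp add: g_def)
  show ?thesis
  proof (cases "g dvd x - a")
    case False
    have "\<not> [a + int k * d = x] (mod m)" for k
    proof
      assume "[a + int k * d = x] (mod m)"
      then have "g * int M dvd a + int k * d - x" using m_eq by (simp add: cong_iff_dvd_diff)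
      then have "g dvd a + int k * d - x" by (rule dvd_mult_left)
      moreover have "g dvd int k * d" by (simp add: g_def)
      ultimately have "g dvd int k * d - (a + int k * d - x)" using dvd_diff by blast
      then show False using False by simp
    qed
    then show ?thesis using False by (simp add: ap_mult_def M_def g_def)
  next
    case True
    then obtain c where c: "x - a = g * c" by (elim dvdE)
    have "[a + int k * d = x] (mod m) \<longleftrightarrow> [int k * (d div g) = c] (mod int M)" for k
    proof -
      have "a + int k * d - x = g * (int k * (d div g) - c)"
        using c by (simp add: algebra_simps g_def)
      then show ?thesis using m_eq g_pos by (simp add: cong_iff_dvd_diff)
    qed
    then show ?thesis
      using True card_cong_solutions_below_modulus[OF M_pos coprime, of c]
      by (simp add: ap_mult_def M_def g_def)
  qed
qed

lemma ap_mult_closed_form: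
  fixes m a d x :: int
  assumes "m > 0" and "M = nat (m div gcd d m)"
  shows "ap_mult m a d (q * M) x = q * (if gcd d m dvd x - a then 1 else 0)"
    and "ap_mult m a d (Suc (q * M)) x =
           q * (if gcd d m dvd x - a then 1 else 0) + (if [a = x] (mod m) then 1 else 0)"
proof -
  have period: "[int M * d = 0] (mod m)" using div_gcd_mult_cong_0[OF assms(1)] assms(2) by simp
  show multiple: "ap_mult m a d (q * M) x = q * (if gcd d m dvd x - a then 1 else 0)"
    using ap_mult_multiple_period[OF period] ap_mult_period[OF assms(1)] assms(2) by simp
  have "[int q * (int M * d) = int q * 0] (mod m)" using period by (rule cong_scalar_left)
  then have "[a + int (q * M) * d = a] (mod m)"
    by (simp add: cong_add_lcancel_0 mult.assoc)
  then have "[a + int (q * M) * d = x] (mod m) \<longleftrightarrow> [a = x] (mod m)"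
    by (meson cong_sym cong_trans)
  then show "ap_mult m a d (Suc (q * M)) x =
           q * (if gcd d m dvd x - a then 1 else 0) + (if [a = x] (mod m) then 1 else 0)"
    using ap_mult_Suc multiple by simp
qed

lemma ap_mult_eq_if_gcd_eq:
  fixes m a d1 d2 x :: int
  assumes "m > 0" and "gcd d1 m = gcd d2 m"
    and "M = nat (m div gcd d1 m)" and "M dvd L \<or> M dvd L - 1"
  shows "ap_mult m a d1 L x = ap_mult m a d2 L x"
proof -
  have M2: "M = nat (m div gcd d2 m)" using assms(2,3) by simp
  consider q where "L = q * M" | q where "L = Suc (q * M)"
    using assms(4) by (metis dvdE mult.commute Suc_pred' neq0_conv dvd_0_right)
  then show ?thesis
    by cases (simp_all add: ap_mult_closed_form[OF assms(1,3)] ap_mult_closed_form[OF assms(1) M2] assms(2))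
qed

lemma at_mult_cong:
  assumes "[x = x'] (mod m)"
  shows "at_mult m a d1 d2 n x = at_mult m a d1 d2 n x'"
proof -
  have "[t = x] (mod m) \<longleftrightarrow> [t = x'] (mod m)" for t
    using assms by (meson cong_sym cong_trans)
  then show ?thesis unfolding at_mult_def by simp
qed

lemma at_mult_swap: "at_mult m a d1 d2 n x = at_mult m a d2 d1 n x"
proof -
  have "{(i, j). i + j < n \<and> [a + int i * d2 + int j * d1 = x] (mod m)} =
        prod.swap ` {(i, j). i + j < n \<and> [a + int i * d1 + int j * d2 = x] (mod m)}"
    by (auto simp: image_iff algebra_simps)
  then show ?thesis unfolding at_mult_def by (simp add: card_image)
qed

lemma at_mult_Suc:
  "at_mult m a d1 d2 (Suc n) x = at_mult m a d1 d2 n (x - d2) + ap_mult m a d1 (Suc n) x"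
proof -
  let ?tri = "\<lambda>n x. {(i, j). i + j < n \<and> [a + int i * d2 + int j * d1 = x] (mod m)}"
  let ?col = "{j. j < Suc n \<and> [a + int j * d1 = x] (mod m)}"
  have shift: "[a + int i * d2 + int j * d1 = x - d2] (mod m) \<longleftrightarrow>
        [a + int (Suc i) * d2 + int j * d1 = x] (mod m)" for i j
    unfolding cong_iff_dvd_diff by (simp add: algebra_simps)
  have split: "?tri (Suc n) x = (\<lambda>(i, j). (Suc i, j)) ` ?tri n (x - d2) \<union> Pair 0 ` ?col"
  proof (rule set_eqI, clarify)
    fix i j
    show "(i, j) \<in> ?tri (Suc n) x \<longleftrightarrow> (i, j) \<in> (\<lambda>(i, j). (Suc i, j)) ` ?tri n (x - d2) \<union> Pair 0 ` ?col"
      using shift by (cases i) (auto simp: image_iff)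
  qed
  have "finite (?tri n y)" for y
    by (rule finite_subset[of _ "{..<n} \<times> {..<n}"]) auto
  then show ?thesis
    unfolding at_mult_def ap_mult_def split
    by (subst card_Un_disjoint) (auto simp: card_image inj_on_def)
qed

lemma at_mult_shift_balance:
  "at_mult m a d1 d2 n (x - d2) + ap_mult m a d1 (Suc n) x =
   at_mult m a d1 d2 n (x - d1) + ap_mult m a d2 (Suc n) x"
  using at_mult_Suc[of m a d1 d2 n x] at_mult_Suc[of m a d2 d1 n x]
  by (simp add: at_mult_swap[of m a d2 d1])

theorem theorem13:
  fixes m a d1 d2 x :: int and n :: nat
  assumes "m > 0"
    and "gcd d1 m = gcd d2 m"
    and "n > 0"
    and "[int n = 0] (mod (m div gcd d1 m)) \<or> [int n = -1] (mod (m div gcd d1 m))"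
  shows "at_mult m a d1 d2 n (x + gcd (d2 - d1) m) = at_mult m a d1 d2 n x"
proof -
  define M where "M = nat (m div gcd d1 m)"
  have "int M = m div gcd d1 m"
    using assms(1) by (simp add: M_def pos_imp_zdiv_nonneg_iff)
  then have "int M dvd int n \<or> int M dvd int (Suc n)"
    using assms(4) by (simp add: cong_0_iff cong_iff_dvd_diff add.commute)
  then have "M dvd Suc n - 1 \<or> M dvd Suc n"
    by (simp only: of_nat_dvd_iff diff_Suc_1)
  then have ap_mult_eq: "ap_mult m a d1 (Suc n) y = ap_mult m a d2 (Suc n) y" for y
    using ap_mult_eq_if_gcd_eq[OF assms(1,2) M_def] by blast
  have "at_mult m a d1 d2 n (y + (d2 - d1)) = at_mult m a d1 d2 n y" for y
    using at_mult_shift_balance[of m a d1 d2 n "y + d2"] ap_mult_eq[of "y + d2"]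
    by (simp add: algebra_simps)
  moreover have "at_mult m a d1 d2 n (y + m) = at_mult m a d1 d2 n y" for y
    by (rule at_mult_cong) (simp add: cong_add_lcancel_0 cong_0_iff)
  ultimately show ?thesis by (rule periodic_int_gcd)
qed

end
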